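(* Let $\mathbb{A}$ be a countably infinite homogeneous oligomorphic structure with oligomorphic approximation, and let $\mathbb{F}$ be a field of characteristic $0$. Then $\mathbb{A}$ has the finite length property over $\mathbb{F}$.
   Context: Homogeneous: every isomorphism between finite substructures extends to an automorphism. Oligomorphic: $\operatorname{Aut}(\mathbb{A})$ has finitely many orbits on each $\mathbb{A}^d$. Oligomorphic approximation: for every $d\ge1$ there is a family $\mathscr{B}$ of finite substructures of $\mathbb{A}$ such that (1) every finite substructure of $\mathbb{A}$ is a substructure of some $\mathbb{B}\in\mathscr{B}$, and (2) there is a finite bound, uniform over $\mathbb{B}\in\mathscr{B}$, on the number of $\operatorname{Aut}(\mathbb{B})$-orbits on $\mathbb{B}^d$. An orbit-finite set over $\mathbb{A}$ is obtained from some $\mathbb{A}^d$ by restricting to an $\operatorname{Aut}(\mathbb{A})$-invariant subset and quotienting by an $\operatorname{Aut}(\mathbb{A})$-invariant equivalence relation. $\operatorname{Lin}_{\mathbb{F}}X$ is the space of finite formal $\mathbb{F}$-linear combinations of elements of $X$ with the induced linear action of $\operatorname{Aut}(\mathbb{A})$; equivariant subspaces are those invariant under this action. The length of $\operatorname{Lin}_{\mathbb{F}}X$ is the supremum of $n$ such that there is a chain $V_0\subsetneq V_1\subsetneq\dots\subsetneq V_n$ of equivariant subspaces. $\mathbb{A}$ has the finite length property over $\mathbb{F}$ if $\operatorname{Lin}_{\mathbb{F}}X$ has finite length for every orbit-finite set $X$ over $\mathbb{A}$. *)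

theory Defs
  imports Main "HOL-Library.Countable_Set"
begin

definition rel_struct :: "'a set \<Rightarrow> ('s \<Rightarrow> nat) \<Rightarrow> ('s \<Rightarrow> 'a list set) \<Rightarrow> bool" where
  "rel_struct A ar Rel \<longleftrightarrow>
     (\<forall>s. \<forall>xs \<in> Rel s. length xs = ar s \<and> set xs \<subseteq> A)"

definition iso_on :: "('s \<Rightarrow> nat) \<Rightarrow> ('s \<Rightarrow> 'a list set) \<Rightarrow> 'a set \<Rightarrow> 'a set \<Rightarrow> ('a \<Rightarrow> 'a) \<Rightarrow> bool" where
  "iso_on ar Rel B C h \<longleftrightarrow> bij_betw h B C \<and>
     (\<forall>s xs. length xs = ar s \<and> set xs \<subseteq> B \<longrightarrow> (xs \<in> Rel s \<longleftrightarrow> map h xs \<in> Rel s))"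

definition aut_on :: "('s \<Rightarrow> nat) \<Rightarrow> ('s \<Rightarrow> 'a list set) \<Rightarrow> 'a set \<Rightarrow> ('a \<Rightarrow> 'a) \<Rightarrow> bool" where
  "aut_on ar Rel B g \<longleftrightarrow> iso_on ar Rel B B g"

definition homogeneous :: "'a set \<Rightarrow> ('s \<Rightarrow> nat) \<Rightarrow> ('s \<Rightarrow> 'a list set) \<Rightarrow> bool" where
  "homogeneous A ar Rel \<longleftrightarrow>
     (\<forall>B C h. finite B \<and> B \<subseteq> A \<and> finite C \<and> C \<subseteq> A \<and> iso_on ar Rel B C h \<longrightarrow>
        (\<exists>g. aut_on ar Rel A g \<and> (\<forall>x\<in>B. g x = h x)))"

definition tuples :: "'a set \<Rightarrow> nat \<Rightarrow> 'a list set" where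
  "tuples B d = {xs. length xs = d \<and> set xs \<subseteq> B}"

definition orbit_rel :: "('s \<Rightarrow> nat) \<Rightarrow> ('s \<Rightarrow> 'a list set) \<Rightarrow> 'a set \<Rightarrow> nat \<Rightarrow> ('a list \<times> 'a list) set" where
  "orbit_rel ar Rel B d =
     {(xs, ys). xs \<in> tuples B d \<and> ys \<in> tuples B d \<and> (\<exists>g. aut_on ar Rel B g \<and> map g xs = ys)}"

definition orbits :: "('s \<Rightarrow> nat) \<Rightarrow> ('s \<Rightarrow> 'a list set) \<Rightarrow> 'a set \<Rightarrow> nat \<Rightarrow> 'a list set set" where
  "orbits ar Rel B d = tuples B d // orbit_rel ar Rel B d"

definition oligomorphic :: "'a set \<Rightarrow> ('s \<Rightarrow> nat) \<Rightarrow> ('s \<Rightarrow> 'a list set) \<Rightarrow> bool" where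
  "oligomorphic A ar Rel \<longleftrightarrow> (\<forall>d. finite (orbits ar Rel A d))"

definition oligomorphic_approximation :: "'a set \<Rightarrow> ('s \<Rightarrow> nat) \<Rightarrow> ('s \<Rightarrow> 'a list set) \<Rightarrow> bool" where
  "oligomorphic_approximation A ar Rel \<longleftrightarrow>
     (\<forall>d\<ge>1. \<exists>\<B>. (\<forall>B\<in>\<B>. finite B \<and> B \<subseteq> A)
        \<and> (\<forall>B0. finite B0 \<and> B0 \<subseteq> A \<longrightarrow> (\<exists>B\<in>\<B>. B0 \<subseteq> B))
        \<and> (\<exists>N::nat. \<forall>B\<in>\<B>. card (orbits ar Rel B d) \<le> N))"

text \<open>X = S // E with S an Aut(A)-invariant subset of A^d and E an
Aut(A)-invariant equivalence relation on S.\<close>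
definition orbit_finite_set :: "'a set \<Rightarrow> ('s \<Rightarrow> nat) \<Rightarrow> ('s \<Rightarrow> 'a list set) \<Rightarrow> nat \<Rightarrow> 'a list set \<Rightarrow> ('a list \<times> 'a list) set \<Rightarrow> bool" where
  "orbit_finite_set A ar Rel d S E \<longleftrightarrow>
     S \<subseteq> tuples A d \<and> equiv S E \<and>
     (\<forall>g. aut_on ar Rel A g \<longrightarrow>
        (\<forall>xs\<in>S. map g xs \<in> S) \<and> (\<forall>(xs, ys)\<in>E. (map g xs, map g ys) \<in> E))"

definition cls_img :: "('a \<Rightarrow> 'a) \<Rightarrow> 'a list set \<Rightarrow> 'a list set" where
  "cls_img g c = map g ` c"

text \<open>Lin_F X: finite formal F-linear combinations of elements of X, represented as
finitely supported functions X \<Rightarrow> F.\<close>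
definition Lin :: "'b set \<Rightarrow> ('b \<Rightarrow> 'f::field) set" where
  "Lin X = {v. finite {x. v x \<noteq> 0} \<and> (\<forall>x. v x \<noteq> 0 \<longrightarrow> x \<in> X)}"

text \<open>Induced linear action of g on Lin_F X: linear extension of x \<mapsto> g x.\<close>
definition lin_act :: "('a \<Rightarrow> 'a) \<Rightarrow> ('a list set \<Rightarrow> 'f::field) \<Rightarrow> ('a list set \<Rightarrow> 'f)" where
  "lin_act g v = (\<lambda>c'. \<Sum>c\<in>{c. v c \<noteq> 0 \<and> cls_img g c = c'}. v c)"

definition lin_subspace :: "'b set \<Rightarrow> ('b \<Rightarrow> 'f::field) set \<Rightarrow> bool" where
  "lin_subspace X V \<longleftrightarrow> V \<subseteq> Lin X \<and> (\<lambda>_. 0) \<in> V \<and>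
     (\<forall>v\<in>V. \<forall>w\<in>V. (\<lambda>x. v x + w x) \<in> V) \<and>
     (\<forall>r. \<forall>v\<in>V. (\<lambda>x. r * v x) \<in> V)"

definition equivariant_subspace :: "'a set \<Rightarrow> ('s \<Rightarrow> nat) \<Rightarrow> ('s \<Rightarrow> 'a list set) \<Rightarrow> 'a list set set \<Rightarrow> ('a list set \<Rightarrow> 'f::field) set \<Rightarrow> bool" where
  "equivariant_subspace A ar Rel X V \<longleftrightarrow> lin_subspace X V \<and>
     (\<forall>g. aut_on ar Rel A g \<longrightarrow> (\<forall>v\<in>V. lin_act g v \<in> V))"

definition finite_length :: "'a set \<Rightarrow> ('s \<Rightarrow> nat) \<Rightarrow> ('s \<Rightarrow> 'a list set) \<Rightarrow> 'a list set set \<Rightarrow> 'f::field itself \<Rightarrow> bool" where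
  "finite_length A ar Rel X (_::'f itself) \<longleftrightarrow>
     (\<exists>N::nat. \<forall>n (V :: nat \<Rightarrow> ('a list set \<Rightarrow> 'f) set).
        (\<forall>i\<le>n. equivariant_subspace A ar Rel X (V i)) \<and> (\<forall>i<n. V i \<subset> V (Suc i)) \<longrightarrow> n \<le> N)"

definition finite_length_property :: "'a set \<Rightarrow> ('s \<Rightarrow> nat) \<Rightarrow> ('s \<Rightarrow> 'a list set) \<Rightarrow> 'f::field itself \<Rightarrow> bool" where
  "finite_length_property A ar Rel F \<longleftrightarrow>
     (\<forall>d S E. orbit_finite_set A ar Rel d S E \<longrightarrow> finite_length A ar Rel (S // E) F)"

end

theory Submission
  imports Defs "HOL.Vector_Spaces" "HOL-Library.Function_Algebras" "HOL-Library.FuncSet"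
begin

text \<open>
Given a strict chain V_0 \<subset> ... \<subset> V_n of equivariant subspaces of Lin(S // E), pick witnesses
v_i \<in> V_(i+1) - V_i and a finite B from the approximating family that contains representatives of
all classes in their supports. The setwise stabiliser of B in Aut(A) acts as a finite permutation
group G on the finite set Y of classes represented over B, and the parts of the V_i supported on Y
form a strict chain of G-invariant subspaces of F^Y. In characteristic 0, averaging projections
over G (as in Maschke's theorem) shows that the spaces of G-invariant kernels on Y \<times> Y with columns
in these subspaces form a strict chain too, so n is at most the number of G-orbits on Y \<times> Y. By
homogeneity every automorphism of B extends to an element of the stabiliser, so this number is at
most the number of Aut(B)-orbits on B^(2d+1), which oligomorphic approximation bounds uniformly
in B.
\<close>

section \<open>Linear algebra in function spaces\<close>

definition fscale :: "'f::field \<Rightarrow> ('x \<Rightarrow> 'f) \<Rightarrow> ('x \<Rightarrow> 'f)" where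
  "fscale r v = (\<lambda>x. r * v x)"

interpretation fv: vector_space fscale
  by unfold_locales (auto simp: fscale_def plus_fun_def algebra_simps)

interpretation fvp: vector_space_pair fscale fscale ..

lemma fscale_apply [simp]: "fscale r v x = r * v x"
  by (simp add: fscale_def)

lemma sum_fun_apply: "sum f S x = (\<Sum>s\<in>S. f s x)"
  by (induction S rule: infinite_finite_induct) auto

definition delta_fun :: "'x \<Rightarrow> 'x \<Rightarrow> 'f::field" where
  "delta_fun z = (\<lambda>y. if y = z then 1 else 0)"

lemma fun_eq_sum_delta_fun:
  fixes u :: "'x \<Rightarrow> 'f::field"
  assumes "finite Y" and "\<forall>y. y \<notin> Y \<longrightarrow> u y = 0"
  shows "u = (\<Sum>z\<in>Y. fscale (u z) (delta_fun z))"
proof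
  fix y
  show "u y = (\<Sum>z\<in>Y. fscale (u z) (delta_fun z)) y"
    using assms by (cases "y \<in> Y") (auto simp: sum_fun_apply delta_fun_def if_distrib cong: if_cong)
qed

lemma (in vector_space) strict_subspace_chain_length_le_card:
  assumes sub: "\<And>i. i \<le> n \<Longrightarrow> subspace (U i)"
    and chain: "\<And>i. i < n \<Longrightarrow> U i \<subset> U (Suc i)"
    and span_T: "U n \<subseteq> span T" and T: "finite T"
  shows "n \<le> card T"
proof -
  have "\<exists>S \<subseteq> U k. independent S \<and> finite S \<and> card S = k" if "k \<le> n" for k
    using that
  proof (induction k)
    case 0
    show ?case by (intro exI[of _ "{}"]) (auto simp: independent_empty)
  next
    case (Suc k)
    then obtain S where S: "S \<subseteq> U k" "independent S" "finite S" "card S = k" by auto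
    have "U k \<subset> U (Suc k)" using chain Suc.prems by simp
    then obtain x where x: "x \<in> U (Suc k)" "x \<notin> U k" by blast
    have "span S \<subseteq> U k" using span_minimal[OF S(1) sub] Suc.prems by simp
    then have "x \<notin> span S" using x(2) by blast
    moreover have "insert x S \<subseteq> U (Suc k)" using S(1) x(1) chain[of k] Suc.prems by auto
    moreover have "x \<notin> S" using \<open>x \<notin> span S\<close> span_superset by blast
    ultimately show ?case
      using S independent_insertI by (intro exI[of _ "insert x S"]) auto
  qed
  then obtain S where "S \<subseteq> U n" "independent S" "card S = n" by blast
  then show ?thesis using independent_span_bound[OF T] span_T by fastforce
qed

lemma span_delta_fun:
  fixes u :: "'x \<Rightarrow> 'f::field"
  assumes "finite Z" and "\<forall>p. p \<notin> Z \<longrightarrow> u p = 0"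
  shows "u \<in> fv.span (delta_fun ` Z)"
proof -
  have "(\<Sum>z\<in>Z. fscale (u z) (delta_fun z)) \<in> fv.span (delta_fun ` Z)"
    by (intro fv.span_sum fv.span_scale fv.span_base) auto
  then show ?thesis using fun_eq_sum_delta_fun[OF assms] by metis
qed

lemma linear_projection_exists:
  fixes W :: "('x \<Rightarrow> 'f::field) set"
  assumes W: "fv.subspace W"
  shows "\<exists>g. Vector_Spaces.linear fscale fscale g \<and> (\<forall>x. g x \<in> W) \<and> (\<forall>u\<in>W. g u = u)"
proof -
  obtain B where B: "B \<subseteq> W" "fv.independent B" "W \<subseteq> fv.span B"
    by (rule fv.maximal_independent_subset)
  obtain C where C: "B \<subseteq> C" "fv.independent C"
    using fv.maximal_independent_subset_extend[of B UNIV] B by blast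
  obtain g where g: "Vector_Spaces.linear fscale fscale g"
      "\<forall>x\<in>C. g x = (if x \<in> B then x else 0)" "range g = fv.span ((\<lambda>x. if x \<in> B then x else 0) ` C)"
    using fvp.linear_independent_extend_subspace[OF C(2), of "\<lambda>x. if x \<in> B then x else 0"] by blast
  have "(\<lambda>x. if x \<in> B then x else 0) ` C \<subseteq> W" using B(1) fv.subspace_0[OF W] by auto
  then have g_W: "g x \<in> W" for x
    using g(3) fv.span_minimal[OF _ W] by blast
  have g_id: "g u = u" if "u \<in> W" for u
    using fvp.linear_eq_on[OF g(1) fv.linear_id, of u B] that B C g(2) by fastforce
  show ?thesis using g(1) g_W g_id by blast
qed

lemma projection_matrix_exists:
  fixes Y :: "'y set" and W :: "('y \<Rightarrow> 'f::field) set"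
  assumes Y: "finite Y" and W: "fv.subspace W" and supp: "\<forall>w\<in>W. \<forall>y. y \<notin> Y \<longrightarrow> w y = 0"
  shows "\<exists>Q. (\<forall>u\<in>W. \<forall>x\<in>Y. (\<Sum>z\<in>Y. Q x z * u z) = u x) \<and>
    (\<forall>z\<in>Y. (\<lambda>x. if x \<in> Y then Q x z else 0) \<in> W)"
proof -
  obtain g where g: "Vector_Spaces.linear fscale fscale g" and g_W: "\<And>x. g x \<in> W"
    and g_id: "\<And>u. u \<in> W \<Longrightarrow> g u = u"
    using linear_projection_exists[OF W] by blast
  define Q where "Q = (\<lambda>x z. g (delta_fun z) x)"
  have "(\<Sum>z\<in>Y. Q x z * u z) = u x" if u: "u \<in> W" for u x
  proof -
    have "u = g u" using g_id[OF u] by simp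
    also have "\<dots> = g (\<Sum>z\<in>Y. fscale (u z) (delta_fun z))"
      using fun_eq_sum_delta_fun[OF Y] supp u by metis
    also have "\<dots> = (\<Sum>z\<in>Y. fscale (u z) (g (delta_fun z)))"
      by (simp add: fvp.linear_sum[OF g] fvp.linear_scale[OF g] o_def)
    finally have "u x = (\<Sum>z\<in>Y. fscale (u z) (g (delta_fun z))) x" by (rule fun_cong)
    then show ?thesis by (simp add: Q_def sum_fun_apply mult.commute)
  qed
  moreover have "(\<lambda>x. if x \<in> Y then Q x z else 0) = g (delta_fun z)" for z
    using supp g_W[of "delta_fun z"] by (auto simp: Q_def)
  ultimately show ?thesis using g_W by (intro exI[of _ Q]) auto
qed

section \<open>Invariant subspaces of a finite permutation group\<close>

definition zero_outside :: "'x set \<Rightarrow> ('x \<Rightarrow> 'f::zero) \<Rightarrow> 'x \<Rightarrow> 'f" where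
  "zero_outside Z M = (\<lambda>p. if p \<in> Z then M p else 0)"

lemma finite_maps_fixing_complement:
  assumes "finite Y"
  shows "finite {\<sigma>::'y \<Rightarrow> 'y. (\<forall>c. c \<notin> Y \<longrightarrow> \<sigma> c = c) \<and> \<sigma> ` Y \<subseteq> Y}" (is "finite ?F")
proof -
  have inj: "inj_on (\<lambda>\<sigma>. restrict \<sigma> Y) ?F"
  proof (rule inj_onI, rule ext)
    fix \<sigma> \<tau> c assume "\<sigma> \<in> ?F" "\<tau> \<in> ?F" "restrict \<sigma> Y = restrict \<tau> Y"
    then show "\<sigma> c = \<tau> c" by (cases "c \<in> Y") (auto dest: fun_cong[of _ _ c])
  qed
  have "(\<lambda>\<sigma>. restrict \<sigma> Y) ` ?F \<subseteq> Y \<rightarrow>\<^sub>E Y" by auto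
  then have "finite ((\<lambda>\<sigma>. restrict \<sigma> Y) ` ?F)"
    by (rule finite_subset) (simp add: finite_PiE assms)
  then show ?thesis by (rule finite_imageD[OF _ inj])
qed

definition precomp_on :: "'y set \<Rightarrow> ('y \<Rightarrow> 'y) \<Rightarrow> ('y \<Rightarrow> 'f::zero) \<Rightarrow> 'y \<Rightarrow> 'f" where
  "precomp_on Y \<sigma> w = (\<lambda>y. if y \<in> Y then w (\<sigma> y) else 0)"

locale finite_perm_group =
  fixes Y :: "'y set" and G :: "('y \<Rightarrow> 'y) set"
  assumes finite_Y: "finite Y"
    and nonempty: "G \<noteq> {}"
    and bij: "\<sigma> \<in> G \<Longrightarrow> bij_betw \<sigma> Y Y"
    and fixes_outside: "\<sigma> \<in> G \<Longrightarrow> y \<notin> Y \<Longrightarrow> \<sigma> y = y"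
    and comp_closed: "\<sigma> \<in> G \<Longrightarrow> \<tau> \<in> G \<Longrightarrow> \<tau> \<circ> \<sigma> \<in> G"
    and inverse_closed: "\<sigma> \<in> G \<Longrightarrow> \<exists>\<tau>\<in>G. \<forall>y\<in>Y. \<tau> (\<sigma> y) = y"
begin

lemma maps_into: "\<sigma> \<in> G \<Longrightarrow> y \<in> Y \<Longrightarrow> \<sigma> y \<in> Y"
  by (rule bij_betw_apply[OF bij])

lemma finite_G: "finite G"
  by (rule finite_subset[OF _ finite_maps_fixing_complement[OF finite_Y]])
     (auto simp: fixes_outside maps_into)

lemma sum_comp_right:
  assumes "\<sigma> \<in> G"
  shows "(\<Sum>\<pi>\<in>G. F (\<pi> \<circ> \<sigma>)) = (\<Sum>\<pi>\<in>G. F \<pi>)"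
proof -
  have inj: "inj_on (\<lambda>\<pi>. \<pi> \<circ> \<sigma>) G"
  proof (rule inj_onI, rule ext)
    fix \<pi> \<pi>' y assume \<pi>: "\<pi> \<in> G" "\<pi>' \<in> G" and eq: "\<pi> \<circ> \<sigma> = \<pi>' \<circ> \<sigma>"
    show "\<pi> y = \<pi>' y"
    proof (cases "y \<in> Y")
      case True
      then have "y \<in> \<sigma> ` Y" using bij[OF assms] by (simp add: bij_betw_def)
      then obtain y0 where "y = \<sigma> y0" by blast
      then show ?thesis using fun_cong[OF eq, of y0] by simp
    next
      case False
      then show ?thesis using fixes_outside[OF \<pi>(1) False] fixes_outside[OF \<pi>(2) False] by simp
    qed
  qed
  have "(\<lambda>\<pi>. \<pi> \<circ> \<sigma>) ` G \<subseteq> G" using assms by (auto intro: comp_closed)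
  then have "(\<lambda>\<pi>. \<pi> \<circ> \<sigma>) ` G = G"
    by (rule card_subset_eq[OF finite_G]) (simp add: card_image[OF inj])
  then have "(\<Sum>\<pi>\<in>G. F \<pi>) = (\<Sum>\<pi>\<in>(\<lambda>\<pi>. \<pi> \<circ> \<sigma>) ` G. F \<pi>)" by simp
  also have "\<dots> = (\<Sum>\<pi>\<in>G. F (\<pi> \<circ> \<sigma>))" by (simp add: sum.reindex[OF inj])
  finally show ?thesis by simp
qed

definition invariant_subspace :: "('y \<Rightarrow> 'f::field) set \<Rightarrow> bool" where
  "invariant_subspace W \<longleftrightarrow> fv.subspace W \<and> (\<forall>w\<in>W. \<forall>y. y \<notin> Y \<longrightarrow> w y = 0) \<and>
     (\<forall>\<sigma>\<in>G. \<forall>w\<in>W. precomp_on Y \<sigma> w \<in> W)"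

text \<open>The G-equivariant linear maps from F^Y to W, as kernels on Y \<times> Y.\<close>
definition invariant_kernels :: "('y \<Rightarrow> 'f::field) set \<Rightarrow> ('y \<times> 'y \<Rightarrow> 'f) set" where
  "invariant_kernels W = {M. (\<forall>p. p \<notin> Y \<times> Y \<longrightarrow> M p = 0) \<and>
     (\<forall>\<sigma>\<in>G. \<forall>y1\<in>Y. \<forall>y2\<in>Y. M (\<sigma> y1, \<sigma> y2) = M (y1, y2)) \<and> (\<forall>z\<in>Y. (\<lambda>x. M (x, z)) \<in> W)}"

lemma invariant_kernels_mono: "W \<subseteq> W' \<Longrightarrow> invariant_kernels W \<subseteq> invariant_kernels W'"
  by (auto simp: invariant_kernels_def)

lemma subspace_invariant_kernels:
  assumes W: "fv.subspace W"
  shows "fv.subspace (invariant_kernels W)"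
  unfolding fv.subspace_def
proof (intro conjI ballI allI)
  show "0 \<in> invariant_kernels W"
    using fv.subspace_0[OF W] by (simp add: invariant_kernels_def zero_fun_def)
  fix M1 M2 assume "M1 \<in> invariant_kernels W" "M2 \<in> invariant_kernels W"
  then show "M1 + M2 \<in> invariant_kernels W"
    using fv.subspace_add[OF W] by (simp add: invariant_kernels_def plus_fun_def)
next
  fix c M assume "M \<in> invariant_kernels W"
  then show "fscale c M \<in> invariant_kernels W"
    using fv.subspace_scale[OF W] by (simp add: invariant_kernels_def fscale_def)
qed

lemma conjugated_projection:
  assumes W: "invariant_subspace W" and Q: "\<forall>u\<in>W. \<forall>x\<in>Y. (\<Sum>z\<in>Y. Q x z * u z) = u x"
    and \<pi>: "\<pi> \<in> G" and u: "u \<in> W" and x: "x \<in> Y"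
  shows "(\<Sum>z\<in>Y. Q (\<pi> x) (\<pi> z) * u z) = u x"
proof -
  obtain \<tau> where \<tau>: "\<tau> \<in> G" "\<forall>y\<in>Y. \<tau> (\<pi> y) = y" using inverse_closed[OF \<pi>] by blast
  have "(\<Sum>z\<in>Y. Q (\<pi> x) (\<pi> z) * u z) = (\<Sum>z\<in>Y. Q (\<pi> x) (\<pi> z) * precomp_on Y \<tau> u (\<pi> z))"
    using \<tau> \<pi> by (auto simp: precomp_on_def maps_into intro!: sum.cong)
  also have "\<dots> = (\<Sum>z\<in>Y. Q (\<pi> x) z * precomp_on Y \<tau> u z)"
    using sum.reindex_bij_betw[OF bij[OF \<pi>], of "\<lambda>z. Q (\<pi> x) z * precomp_on Y \<tau> u z"] by simp
  also have "\<dots> = precomp_on Y \<tau> u (\<pi> x)"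
    using Q W \<tau>(1) u maps_into[OF \<pi> x] by (simp add: invariant_subspace_def)
  also have "\<dots> = u x" using \<tau> maps_into[OF \<pi> x] x by (simp add: precomp_on_def)
  finally show ?thesis .
qed

lemma averaged_projection:
  assumes W: "invariant_subspace W"
  shows "\<exists>P \<in> invariant_kernels W. \<forall>u\<in>W. \<forall>x\<in>Y. (\<Sum>z\<in>Y. P (x, z) * u z) = of_nat (card G) * u x"
proof -
  have W_sub: "fv.subspace W" and W_supp: "\<forall>w\<in>W. \<forall>y. y \<notin> Y \<longrightarrow> w y = 0"
    and W_inv: "\<And>\<sigma> w. \<sigma> \<in> G \<Longrightarrow> w \<in> W \<Longrightarrow> precomp_on Y \<sigma> w \<in> W"
    using W by (auto simp: invariant_subspace_def)
  obtain Q where Q_proj: "\<forall>u\<in>W. \<forall>x\<in>Y. (\<Sum>z\<in>Y. Q x z * u z) = u x"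
    and Q_col: "\<forall>z\<in>Y. (\<lambda>x. if x \<in> Y then Q x z else 0) \<in> W"
    using projection_matrix_exists[OF finite_Y W_sub W_supp] by blast
  define P where "P = (\<lambda>(x, z). if x \<in> Y \<and> z \<in> Y then (\<Sum>\<pi>\<in>G. Q (\<pi> x) (\<pi> z)) else 0)"
  have P_supp: "P p = 0" if "p \<notin> Y \<times> Y" for p
    using that by (auto simp: P_def split: prod.splits)
  have P_inv: "P (\<sigma> y1, \<sigma> y2) = P (y1, y2)" if "\<sigma> \<in> G" "y1 \<in> Y" "y2 \<in> Y" for \<sigma> y1 y2
    using that sum_comp_right[OF that(1), of "\<lambda>\<pi>. Q (\<pi> y1) (\<pi> y2)"] by (simp add: P_def maps_into)
  have P_col: "(\<lambda>x. P (x, z)) \<in> W" if z: "z \<in> Y" for z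
  proof -
    have "(\<lambda>x. P (x, z)) = (\<Sum>\<pi>\<in>G. precomp_on Y \<pi> (\<lambda>x. if x \<in> Y then Q x (\<pi> z) else 0))"
      using z by (auto simp: P_def precomp_on_def sum_fun_apply maps_into)
    also have "\<dots> \<in> W"
      using Q_col z by (intro fv.subspace_sum[OF W_sub] W_inv) (auto simp: maps_into)
    finally show ?thesis .
  qed
  have "(\<Sum>z\<in>Y. P (x, z) * u z) = of_nat (card G) * u x" if u: "u \<in> W" and x: "x \<in> Y" for u x
  proof -
    have "(\<Sum>z\<in>Y. P (x, z) * u z) = (\<Sum>z\<in>Y. \<Sum>\<pi>\<in>G. Q (\<pi> x) (\<pi> z) * u z)"
      using x by (intro sum.cong) (simp_all add: P_def sum_distrib_right)
    also have "\<dots> = (\<Sum>\<pi>\<in>G. \<Sum>z\<in>Y. Q (\<pi> x) (\<pi> z) * u z)" by (rule sum.swap)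
    also have "\<dots> = (\<Sum>\<pi>\<in>G. u x)" using conjugated_projection[OF W Q_proj _ u x] by simp
    finally show ?thesis by simp
  qed
  moreover have "P \<in> invariant_kernels W"
    using P_supp P_inv P_col by (simp add: invariant_kernels_def)
  ultimately show ?thesis by blast
qed

lemma invariant_kernels_strict_mono:
  fixes W W' :: "('y \<Rightarrow> 'f::field_char_0) set"
  assumes W: "fv.subspace W" and W': "invariant_subspace W'" and "W \<subset> W'"
  shows "invariant_kernels W \<subset> invariant_kernels W'"
proof -
  obtain v where v: "v \<in> W'" "v \<notin> W" using \<open>W \<subset> W'\<close> by blast
  obtain P where P: "P \<in> invariant_kernels W'"
    and P_proj: "\<forall>u\<in>W'. \<forall>x\<in>Y. (\<Sum>z\<in>Y. P (x, z) * u z) = of_nat (card G) * u x"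
    using averaged_projection[OF W'] by blast
  have "P \<notin> invariant_kernels W"
  proof
    assume "P \<in> invariant_kernels W"
    then have "(\<lambda>x. P (x, z)) \<in> W" if "z \<in> Y" for z
      using that by (simp add: invariant_kernels_def)
    then have "(\<Sum>z\<in>Y. fscale (v z) (\<lambda>x. P (x, z))) \<in> W"
      by (intro fv.subspace_sum[OF W] fv.subspace_scale[OF W])
    moreover have "(\<Sum>z\<in>Y. fscale (v z) (\<lambda>x. P (x, z))) = fscale (of_nat (card G)) v"
    proof
      fix x
      show "(\<Sum>z\<in>Y. fscale (v z) (\<lambda>x. P (x, z))) x = fscale (of_nat (card G)) v x"
      proof (cases "x \<in> Y")
        case True
        then show ?thesis using P_proj v(1) by (simp add: sum_fun_apply mult.commute)
      next
        case False
        then have "P (x, z) = 0" for z using P by (simp add: invariant_kernels_def)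
        moreover have "v x = 0" using False v(1) W' by (simp add: invariant_subspace_def)
        ultimately show ?thesis by (simp add: sum_fun_apply)
      qed
    qed
    ultimately have "fscale (inverse (of_nat (card G))) (fscale (of_nat (card G)) v) \<in> W"
      using fv.subspace_scale[OF W] by metis
    moreover have "inverse (of_nat (card G)) * of_nat (card G) = (1 :: 'f)"
      using finite_G nonempty by simp
    ultimately have "v \<in> W" by (simp add: fscale_def mult.assoc[symmetric])
    with v(2) show False ..
  qed
  then show ?thesis using P invariant_kernels_mono \<open>W \<subset> W'\<close> by blast
qed

lemma invariant_kernel_eqI:
  assumes cover: "\<forall>y1\<in>Y. \<forall>y2\<in>Y. \<exists>\<sigma>\<in>G. (\<sigma> y1, \<sigma> y2) \<in> Z"
    and M: "M \<in> invariant_kernels W" "M' \<in> invariant_kernels W" and eq: "\<forall>p\<in>Z. M p = M' p"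
  shows "M = M'"
proof
  fix p :: "'y \<times> 'y"
  show "M p = M' p"
  proof (cases "p \<in> Y \<times> Y")
    case True
    then obtain y1 y2 \<sigma> where "p = (y1, y2)" "y1 \<in> Y" "y2 \<in> Y" "\<sigma> \<in> G" "(\<sigma> y1, \<sigma> y2) \<in> Z"
      using cover by blast
    then have "M p = M (\<sigma> y1, \<sigma> y2)" "M' p = M' (\<sigma> y1, \<sigma> y2)"
      using M by (simp_all add: invariant_kernels_def)
    then show ?thesis using eq \<open>(\<sigma> y1, \<sigma> y2) \<in> Z\<close> by simp
  next
    case False
    then have "M p = 0" "M' p = 0" using M unfolding invariant_kernels_def by blast+
    then show ?thesis by simp
  qed
qed

lemma zero_outside_invariant_kernels_strict_mono:
  fixes W W' :: "('y \<Rightarrow> 'f::field_char_0) set"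
  assumes cover: "\<forall>y1\<in>Y. \<forall>y2\<in>Y. \<exists>\<sigma>\<in>G. (\<sigma> y1, \<sigma> y2) \<in> Z"
    and W: "fv.subspace W" and W': "invariant_subspace W'" and "W \<subset> W'"
  shows "zero_outside Z ` invariant_kernels W \<subset> zero_outside Z ` invariant_kernels W'"
proof -
  have K: "invariant_kernels W \<subset> invariant_kernels W'"
    using invariant_kernels_strict_mono[OF W W' \<open>W \<subset> W'\<close>] .
  then obtain M where M: "M \<in> invariant_kernels W'" "M \<notin> invariant_kernels W" by blast
  have "zero_outside Z M \<notin> zero_outside Z ` invariant_kernels W"
  proof
    assume "zero_outside Z M \<in> zero_outside Z ` invariant_kernels W"
    then obtain M' where M': "M' \<in> invariant_kernels W" "zero_outside Z M = zero_outside Z M'"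
      by blast
    then have "M = M'"
      using invariant_kernel_eqI[OF cover M(1)] K by (metis psubsetD zero_outside_def)
    with M(2) M'(1) show False by simp
  qed
  then show ?thesis using M(1) K by blast
qed

theorem invariant_subspace_chain_length_le:
  fixes W :: "nat \<Rightarrow> ('y \<Rightarrow> 'f::field_char_0) set"
  assumes Z: "Z \<subseteq> Y \<times> Y" and cover: "\<forall>y1\<in>Y. \<forall>y2\<in>Y. \<exists>\<sigma>\<in>G. (\<sigma> y1, \<sigma> y2) \<in> Z"
    and W: "\<And>i. i \<le> n \<Longrightarrow> invariant_subspace (W i)"
    and chain: "\<And>i. i < n \<Longrightarrow> W i \<subset> W (Suc i)"
  shows "n \<le> card Z"
proof -
  have finite_Z: "finite Z" using Z finite_Y finite_subset by blast
  define U where "U i = zero_outside Z ` invariant_kernels (W i)" for i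
  have "Vector_Spaces.linear fscale fscale (zero_outside Z :: ('y \<times> 'y \<Rightarrow> 'f) \<Rightarrow> _)"
    by (auto simp: Vector_Spaces.linear_iff zero_outside_def fun_eq_iff fv.vector_space_axioms)
  then have U_subspace: "fv.subspace (U i)" if "i \<le> n" for i
    using W[OF that] by (auto simp: U_def invariant_subspace_def
        intro: fvp.linear_subspace_image subspace_invariant_kernels)
  have U_chain: "U i \<subset> U (Suc i)" if i: "i < n" for i
    using W[of i] W[of "Suc i"] i chain[OF i] unfolding U_def
    by (intro zero_outside_invariant_kernels_strict_mono[OF cover])
      (simp_all add: invariant_subspace_def)
  have "zero_outside Z M \<in> fv.span (delta_fun ` Z)" for M
    by (rule span_delta_fun[OF finite_Z]) (simp add: zero_outside_def)
  then have U_span: "U n \<subseteq> fv.span (delta_fun ` Z)" by (auto simp: U_def)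
  have "n \<le> card (delta_fun ` Z :: ('y \<times> 'y \<Rightarrow> 'f) set)"
    by (rule fv.strict_subspace_chain_length_le_card
          [OF U_subspace U_chain U_span finite_imageI[OF finite_Z]])
  also have "\<dots> \<le> card Z" using card_image_le[OF finite_Z] .
  finally show ?thesis .
qed

end

section \<open>Automorphisms and orbit-finite sets\<close>

lemma aut_on_bij_betw: "aut_on ar Rel A g \<Longrightarrow> bij_betw g A A"
  by (simp add: aut_on_def iso_on_def)

lemma aut_on_id: "aut_on ar Rel A id"
  by (simp add: aut_on_def iso_on_def)

lemma aut_on_comp:
  assumes g: "aut_on ar Rel A g" and h: "aut_on ar Rel A h"
  shows "aut_on ar Rel A (h \<circ> g)"
proof -
  have "xs \<in> Rel s \<longleftrightarrow> map (h \<circ> g) xs \<in> Rel s" if "length xs = ar s" "set xs \<subseteq> A" for s xs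
  proof -
    have "set (map g xs) \<subseteq> A"
      using that aut_on_bij_betw[OF g] by (auto simp: bij_betw_def)
    then show ?thesis
      using that g h unfolding aut_on_def iso_on_def by (metis length_map map_map)
  qed
  then show ?thesis
    using bij_betw_trans[OF aut_on_bij_betw[OF g] aut_on_bij_betw[OF h]]
    by (simp add: aut_on_def iso_on_def)
qed

lemma aut_on_inv_into:
  assumes g: "aut_on ar Rel A g"
  shows "aut_on ar Rel A (inv_into A g)"
proof -
  have bij: "bij_betw g A A" using aut_on_bij_betw[OF g] .
  have "xs \<in> Rel s \<longleftrightarrow> map (inv_into A g) xs \<in> Rel s" if "length xs = ar s" "set xs \<subseteq> A" for s xs
  proof -
    have "set (map (inv_into A g) xs) \<subseteq> A"
      using that bij_betw_inv_into[OF bij] by (auto simp: bij_betw_def)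
    moreover have "map g (map (inv_into A g) xs) = xs"
      using that bij by (auto simp: bij_betw_def f_inv_into_f intro!: map_idI)
    ultimately show ?thesis
      using that g unfolding aut_on_def iso_on_def by (metis length_map)
  qed
  then show ?thesis
    using bij_betw_inv_into[OF bij] by (simp add: aut_on_def iso_on_def)
qed

lemma cls_img_comp: "cls_img h (cls_img g c) = cls_img (h \<circ> g) c"
  by (simp add: cls_img_def image_image)

lemma finite_tuples: "finite B \<Longrightarrow> finite (tuples B d)"
  unfolding tuples_def using finite_lists_length_eq[of B d] by (simp add: conj_commute)

lemma cls_img_class:
  assumes S: "orbit_finite_set A ar Rel d S E" and g: "aut_on ar Rel A g" and ys: "ys \<in> S"
  shows "cls_img g (E `` {ys}) = E `` {map g ys}"
proof
  have E_inv: "(map f xs, map f zs) \<in> E" if "aut_on ar Rel A f" "(xs, zs) \<in> E" for f xs zs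
    using S that unfolding orbit_finite_set_def by blast
  then show "cls_img g (E `` {ys}) \<subseteq> E `` {map g ys}"
    using g by (auto simp: cls_img_def)
  show "E `` {map g ys} \<subseteq> cls_img g (E `` {ys})"
  proof
    fix ws assume "ws \<in> E `` {map g ys}"
    then have ws: "(map g ys, ws) \<in> E" by simp
    have bij: "bij_betw g A A" using aut_on_bij_betw[OF g] .
    have "set ys \<subseteq> A" "set ws \<subseteq> A"
      using S ys ws by (auto simp: orbit_finite_set_def tuples_def equiv_def refl_on_def)
    then have "map (inv_into A g) (map g ys) = ys" "map g (map (inv_into A g) ws) = ws"
      using bij by (auto simp: bij_betw_def f_inv_into_f intro!: map_idI)
    moreover have "(map (inv_into A g) (map g ys), map (inv_into A g) ws) \<in> E"
      using E_inv[OF aut_on_inv_into[OF g] ws] .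
    ultimately show "ws \<in> cls_img g (E `` {ys})"
      unfolding cls_img_def by (metis Image_singleton_iff image_eqI)
  qed
qed

lemma cls_img_cancel:
  assumes S: "orbit_finite_set A ar Rel d S E" and c: "c \<in> S // E"
    and g: "aut_on ar Rel A g" and h: "aut_on ar Rel A h" and hg: "\<forall>x\<in>A. h (g x) = x"
  shows "cls_img h (cls_img g c) = c"
proof -
  obtain ys where ys: "ys \<in> S" "c = E `` {ys}" using c by (auto elim: quotientE)
  have "set ys \<subseteq> A" using S ys by (auto simp: orbit_finite_set_def tuples_def)
  then have "map (h \<circ> g) ys = ys" using hg by (auto intro!: map_idI)
  then show ?thesis
    using cls_img_class[OF S aut_on_comp[OF g h] ys(1)] ys(2) by (simp add: cls_img_comp)
qed

definition classes_over :: "'a list set \<Rightarrow> ('a list \<times> 'a list) set \<Rightarrow> 'a set \<Rightarrow> 'a list set set" where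
  "classes_over S E B = {E `` {ys} | ys. ys \<in> S \<and> set ys \<subseteq> B}"

lemma classes_over_mono: "B \<subseteq> B' \<Longrightarrow> classes_over S E B \<subseteq> classes_over S E B'"
  by (auto simp: classes_over_def)

lemma classes_over_subset_quotient: "classes_over S E B \<subseteq> S // E"
  by (auto simp: classes_over_def quotientI)

lemma finite_classes_over:
  assumes "S \<subseteq> tuples A d" and "finite B"
  shows "finite (classes_over S E B)"
proof -
  have "classes_over S E B \<subseteq> (\<lambda>ys. E `` {ys}) ` tuples B d"
    using assms(1) by (auto simp: classes_over_def tuples_def)
  then show ?thesis using finite_tuples[OF assms(2)] finite_surj by blast
qed

lemma finite_set_of_classes_over:
  assumes "S \<subseteq> tuples A d" and "finite C" and "C \<subseteq> S // E"
  shows "\<exists>B. finite B \<and> B \<subseteq> A \<and> C \<subseteq> classes_over S E B"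
proof -
  have "\<forall>c\<in>C. \<exists>ys. ys \<in> S \<and> c = E `` {ys}" using assms(3) by (auto elim!: quotientE)
  then obtain r where r: "\<And>c. c \<in> C \<Longrightarrow> r c \<in> S \<and> c = E `` {r c}" by metis
  have "(\<Union>c\<in>C. set (r c)) \<subseteq> A" using r assms(1) by (fastforce simp: tuples_def)
  moreover have "C \<subseteq> classes_over S E (\<Union>c\<in>C. set (r c))"
    using r by (fastforce simp: classes_over_def)
  ultimately show ?thesis using assms(2) by (intro exI[of _ "\<Union>c\<in>C. set (r c)"]) auto
qed

lemma strict_chain_witnesses_over_finite_set:
  fixes V :: "nat \<Rightarrow> ('a list set \<Rightarrow> 'f::field) set"
  assumes S: "S \<subseteq> tuples A d"
    and chain: "\<And>i. i < n \<Longrightarrow> V i \<subset> V (Suc i)" and Lin: "\<And>i. i < n \<Longrightarrow> V (Suc i) \<subseteq> Lin (S // E)"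
  shows "\<exists>B. finite B \<and> B \<subseteq> A \<and>
    (\<forall>i<n. \<exists>v \<in> V (Suc i) - V i. \<forall>c. v c \<noteq> 0 \<longrightarrow> c \<in> classes_over S E B)"
proof -
  have "\<forall>i. \<exists>v. i < n \<longrightarrow> v \<in> V (Suc i) - V i" using chain by blast
  then obtain v where v: "\<And>i. i < n \<Longrightarrow> v i \<in> V (Suc i) - V i" by metis
  define C where "C = (\<Union>i<n. {c. v i c \<noteq> 0})"
  have "v i \<in> Lin (S // E)" if "i < n" for i using v Lin that by blast
  then have "finite C" "C \<subseteq> S // E" by (auto simp: C_def Lin_def)
  then obtain B where B: "finite B" "B \<subseteq> A" "C \<subseteq> classes_over S E B"
    by (metis finite_set_of_classes_over[OF S])
  have "\<exists>w \<in> V (Suc i) - V i. \<forall>c. w c \<noteq> 0 \<longrightarrow> c \<in> classes_over S E B" if i: "i < n" for i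
    using v[OF i] B(3) i by (intro bexI[of _ "v i"]) (auto simp: C_def)
  then show ?thesis using B(1,2) by blast
qed

lemma finite_orbits:
  assumes "finite B"
  shows "finite (orbits ar Rel B d)"
  unfolding orbits_def quotient_def using finite_tuples[OF assms] by simp

lemma orbit_representative:
  assumes "xs \<in> tuples B d"
  shows "\<exists>g. aut_on ar Rel B g \<and> map g xs = (SOME r. r \<in> orbit_rel ar Rel B d `` {xs})"
proof -
  have "xs \<in> orbit_rel ar Rel B d `` {xs}"
    using assms aut_on_id by (fastforce simp: orbit_rel_def)
  then have "(SOME r. r \<in> orbit_rel ar Rel B d `` {xs}) \<in> orbit_rel ar Rel B d `` {xs}"
    by (rule someI)
  then show ?thesis by (auto simp: orbit_rel_def)
qed

section \<open>Restriction to a finite substructure\<close>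

locale orbit_finite_local =
  fixes A :: "'a set" and ar :: "'s \<Rightarrow> nat" and Rel :: "'s \<Rightarrow> 'a list set"
    and d :: nat and S :: "'a list set" and E :: "('a list \<times> 'a list) set" and B :: "'a set"
  assumes orbit_finite: "orbit_finite_set A ar Rel d S E"
    and finite_B: "finite B" and B_subset: "B \<subseteq> A"
begin

abbreviation local_classes :: "'a list set set" where
  "local_classes \<equiv> classes_over S E B"

definition stabiliser :: "('a \<Rightarrow> 'a) set" where
  "stabiliser = {g. aut_on ar Rel A g \<and> g ` B = B}"

definition local_action :: "('a \<Rightarrow> 'a) \<Rightarrow> 'a list set \<Rightarrow> 'a list set" where
  "local_action g c = (if c \<in> local_classes then cls_img g c else c)"

definition local_group :: "('a list set \<Rightarrow> 'a list set) set" where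
  "local_group = local_action ` stabiliser"

lemma S_tuples: "S \<subseteq> tuples A d"
  using orbit_finite by (simp add: orbit_finite_set_def)

lemma stabiliser_bij_betw: "g \<in> stabiliser \<Longrightarrow> bij_betw g A A"
  unfolding stabiliser_def by (blast intro: aut_on_bij_betw)

lemma stabiliser_comp: "g \<in> stabiliser \<Longrightarrow> h \<in> stabiliser \<Longrightarrow> h \<circ> g \<in> stabiliser"
  unfolding stabiliser_def using aut_on_comp
    by (metis (mono_tags, lifting) image_comp mem_Collect_eq)

lemma stabiliser_inv_into:
  assumes "g \<in> stabiliser"
  shows "inv_into A g \<in> stabiliser"
proof -
  have "inj_on g A" "g ` B = B"
    using assms stabiliser_bij_betw[OF assms] by (simp_all add: stabiliser_def bij_betw_def)
  then have "inv_into A g ` B = B" using inv_into_image_cancel B_subset by metis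
  then show ?thesis using assms aut_on_inv_into by (auto simp: stabiliser_def)
qed

lemma local_action_class:
  assumes g: "g \<in> stabiliser" and ys: "ys \<in> S" "set ys \<subseteq> B"
  shows "local_action g (E `` {ys}) = E `` {map g ys}"
  using cls_img_class[OF orbit_finite _ ys(1)] g ys
    by (auto simp: local_action_def classes_over_def stabiliser_def)

lemma cls_img_local_classes:
  assumes g: "g \<in> stabiliser" and c: "c \<in> local_classes"
  shows "cls_img g c \<in> local_classes"
proof -
  obtain ys where ys: "ys \<in> S" "set ys \<subseteq> B" "c = E `` {ys}" using c by (auto simp: classes_over_def)
  have "map g ys \<in> S" using orbit_finite g ys(1) by (auto simp: orbit_finite_set_def stabiliser_def)
  moreover have "set (map g ys) \<subseteq> B" using g ys(2) by (auto simp: stabiliser_def)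
  moreover have "cls_img g c = E `` {map g ys}"
    using cls_img_class[OF orbit_finite _ ys(1)] g ys(3) by (simp add: stabiliser_def)
  ultimately show ?thesis unfolding classes_over_def by blast
qed

lemma cls_img_inv_into_left:
  assumes g: "g \<in> stabiliser" and c: "c \<in> local_classes"
  shows "cls_img (inv_into A g) (cls_img g c) = c"
proof (rule cls_img_cancel[OF orbit_finite])
  show "c \<in> S // E" using c classes_over_subset_quotient by blast
  show "aut_on ar Rel A g" "aut_on ar Rel A (inv_into A g)"
    using g stabiliser_inv_into[OF g] by (simp_all add: stabiliser_def)
  have "inj_on g A" using stabiliser_bij_betw[OF g] by (simp add: bij_betw_def)
  then show "\<forall>x\<in>A. inv_into A g (g x) = x" by simp
qed

lemma cls_img_inv_into_right:
  assumes g: "g \<in> stabiliser" and c: "c \<in> local_classes"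
  shows "cls_img g (cls_img (inv_into A g) c) = c"
proof (rule cls_img_cancel[OF orbit_finite])
  show "c \<in> S // E" using c classes_over_subset_quotient by blast
  show "aut_on ar Rel A g" "aut_on ar Rel A (inv_into A g)"
    using g stabiliser_inv_into[OF g] by (simp_all add: stabiliser_def)
  have "g ` A = A" using stabiliser_bij_betw[OF g] by (simp add: bij_betw_def)
  then show "\<forall>x\<in>A. g (inv_into A g x) = x" by (metis f_inv_into_f)
qed

lemma local_action_comp:
  assumes "g \<in> stabiliser"
  shows "local_action h \<circ> local_action g = local_action (h \<circ> g)"
  using cls_img_local_classes[OF assms] by (auto simp: local_action_def cls_img_comp fun_eq_iff)

lemma local_action_inv_into:
  assumes "g \<in> stabiliser" and "c \<in> local_classes"
  shows "local_action (inv_into A g) (local_action g c) = c"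
    and "local_action g (local_action (inv_into A g) c) = c"
  using assms cls_img_local_classes stabiliser_inv_into cls_img_inv_into_left cls_img_inv_into_right
  by (simp_all add: local_action_def)

lemma finite_perm_group_local_group: "finite_perm_group local_classes local_group"
proof
  show "finite local_classes" using finite_classes_over[OF S_tuples finite_B] .
  have "id \<in> stabiliser" using aut_on_id by (simp add: stabiliser_def)
  then show "local_group \<noteq> {}" by (auto simp: local_group_def)
next
  fix \<sigma> assume "\<sigma> \<in> local_group"
  then obtain g where g: "g \<in> stabiliser" and \<sigma>: "\<sigma> = local_action g"
    by (auto simp: local_group_def)
  have into: "local_action h c \<in> local_classes" if "h \<in> stabiliser" "c \<in> local_classes" for h c
    using cls_img_local_classes that by (simp add: local_action_def)
  show "bij_betw \<sigma> local_classes local_classes"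
    unfolding \<sigma> using local_action_inv_into[OF g] into g stabiliser_inv_into[OF g]
    by (intro bij_betw_byWitness[where f' = "local_action (inv_into A g)"]) auto
  show "\<sigma> y = y" if "y \<notin> local_classes" for y
    using that by (simp add: \<sigma> local_action_def)
  show "\<exists>\<tau>\<in>local_group. \<forall>y\<in>local_classes. \<tau> (\<sigma> y) = y"
    using local_action_inv_into(1)[OF g] stabiliser_inv_into[OF g] by (auto simp: \<sigma> local_group_def)
  fix \<tau> assume "\<tau> \<in> local_group"
  then obtain h where h: "h \<in> stabiliser" and \<tau>: "\<tau> = local_action h"
    by (auto simp: local_group_def)
  show "\<tau> \<circ> \<sigma> \<in> local_group"
    using local_action_comp[OF g, of h] stabiliser_comp[OF g h] by (simp add: \<sigma> \<tau> local_group_def)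
qed

sublocale local_perm: finite_perm_group local_classes local_group
  by (rule finite_perm_group_local_group)

lemma lin_act_inv_into:
  assumes g: "g \<in> stabiliser" and w: "\<forall>c. c \<notin> local_classes \<longrightarrow> w c = 0"
  shows "lin_act (inv_into A g) w = precomp_on local_classes (local_action g) w"
proof
  fix c'
  have "{c. w c \<noteq> 0 \<and> cls_img (inv_into A g) c = c'} =
    (if c' \<in> local_classes \<and> w (cls_img g c') \<noteq> 0 then {cls_img g c'} else {})"
  proof -
    have "c' \<in> local_classes \<and> c = cls_img g c'" if "w c \<noteq> 0" "cls_img (inv_into A g) c = c'" for c
    proof -
      have "c \<in> local_classes" using that(1) w by blast
      then show ?thesis
        using that(2) cls_img_local_classes[OF stabiliser_inv_into[OF g]]
          cls_img_inv_into_right[OF g]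
        by auto
    qed
    then show ?thesis using cls_img_inv_into_left[OF g] by auto
  qed
  then show "lin_act (inv_into A g) w c' = precomp_on local_classes (local_action g) w c'"
    by (auto simp: lin_act_def precomp_on_def local_action_def)
qed

lemma invariant_subspace_supported_part:
  assumes V: "equivariant_subspace A ar Rel (S // E) V"
  shows "local_perm.invariant_subspace {w \<in> V. \<forall>c. c \<notin> local_classes \<longrightarrow> w c = 0}"
proof -
  let ?W = "{w \<in> V. \<forall>c. c \<notin> local_classes \<longrightarrow> w c = 0}"
  have "lin_subspace (S // E) V" using V by (simp add: equivariant_subspace_def)
  then have "fv.subspace ?W"
    by (auto simp: fv.subspace_def lin_subspace_def zero_fun_def plus_fun_def fscale_def)
  moreover have "precomp_on local_classes \<sigma> w \<in> ?W" if \<sigma>: "\<sigma> \<in> local_group" and w: "w \<in> ?W" for \<sigma> w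
  proof -
    obtain g where g: "g \<in> stabiliser" "\<sigma> = local_action g" using \<sigma> by (auto simp: local_group_def)
    have "aut_on ar Rel A (inv_into A g)" using stabiliser_inv_into[OF g(1)]
      by (simp add: stabiliser_def)
    then have "lin_act (inv_into A g) w \<in> V" using V w by (simp add: equivariant_subspace_def)
    moreover have "lin_act (inv_into A g) w = precomp_on local_classes \<sigma> w"
      using lin_act_inv_into[OF g(1)] w g(2) by blast
    ultimately show ?thesis by (simp add: precomp_on_def)
  qed
  ultimately show ?thesis by (simp add: local_perm.invariant_subspace_def)
qed

lemma aut_on_extends_to_stabiliser:
  assumes hom: "homogeneous A ar Rel" and g: "aut_on ar Rel B g"
  shows "\<exists>g' \<in> stabiliser. \<forall>b\<in>B. g' b = g b"
proof -
  obtain g' where g': "aut_on ar Rel A g'" "\<forall>b\<in>B. g' b = g b"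
    using hom g finite_B B_subset unfolding homogeneous_def aut_on_def by blast
  have "g ` B = B" using g by (simp add: aut_on_def iso_on_def bij_betw_def)
  then have "g' ` B = B" using g'(2) by (metis image_cong)
  then show ?thesis using g' by (intro bexI[of _ g']) (auto simp: stabiliser_def)
qed

text \<open>Pairs of local classes are read off tuples of length 2d+1 over B; the final entry a0 only
makes this arity positive, as oligomorphic approximation is assumed for positive arities only.\<close>
definition orbit_class_pair :: "'a list set \<Rightarrow> 'a list set \<times> 'a list set" where
  "orbit_class_pair orb =
     (E `` {take d (SOME r. r \<in> orb)}, E `` {take d (drop d (SOME r. r \<in> orb))})"

lemma stabiliser_moves_pair_to_orbit_class_pair:
  assumes hom: "homogeneous A ar Rel" and a0: "a0 \<in> B"
    and y1: "y1 \<in> local_classes" and y2: "y2 \<in> local_classes"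
  shows "\<exists>g\<in>stabiliser. (local_action g y1, local_action g y2) \<in>
    orbit_class_pair ` orbits ar Rel B (Suc (2 * d))"
proof -
  obtain ys1 ys2 where ys: "ys1 \<in> S" "set ys1 \<subseteq> B" "y1 = E `` {ys1}"
    "ys2 \<in> S" "set ys2 \<subseteq> B" "y2 = E `` {ys2}"
    using y1 y2 by (auto simp: classes_over_def)
  have len: "length ys1 = d" "length ys2 = d" using S_tuples ys(1,4) by (auto simp: tuples_def)
  define xs where "xs = ys1 @ ys2 @ [a0]"
  define orb where "orb = orbit_rel ar Rel B (Suc (2 * d)) `` {xs}"
  have xs: "xs \<in> tuples B (Suc (2 * d))" using ys(2,5) len a0 by (auto simp: xs_def tuples_def)
  then have orb: "orb \<in> orbits ar Rel B (Suc (2 * d))" by (simp add: orb_def orbits_def quotientI)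
  obtain g where g: "aut_on ar Rel B g" "map g xs = (SOME r. r \<in> orb)"
    using orbit_representative[OF xs] by (auto simp: orb_def)
  obtain g' where g': "g' \<in> stabiliser" "\<forall>b\<in>B. g' b = g b"
    using aut_on_extends_to_stabiliser[OF hom g(1)] by blast
  have "map g' ys1 = map g ys1" "map g' ys2 = map g ys2"
    using g'(2) ys(2,5) by (auto intro!: map_cong)
  then have "take d (SOME r. r \<in> orb) = map g' ys1" "take d (drop d (SOME r. r \<in> orb)) = map g' ys2"
    unfolding g(2)[symmetric] xs_def using len by simp_all
  then have "(local_action g' y1, local_action g' y2) = orbit_class_pair orb"
    using local_action_class[OF g'(1)] ys by (simp add: orbit_class_pair_def)
  then show ?thesis using g'(1) orb by (metis image_eqI)
qed

lemma small_set_meeting_pair_orbits: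
  assumes hom: "homogeneous A ar Rel" and a0: "a0 \<in> B"
  shows "\<exists>Z \<subseteq> local_classes \<times> local_classes. card Z \<le> card (orbits ar Rel B (Suc (2 * d))) \<and>
    (\<forall>y1\<in>local_classes. \<forall>y2\<in>local_classes. \<exists>\<sigma>\<in>local_group. (\<sigma> y1, \<sigma> y2) \<in> Z)"
proof -
  let ?orbits = "orbits ar Rel B (Suc (2 * d))"
  define Z where "Z = orbit_class_pair ` ?orbits \<inter> local_classes \<times> local_classes"
  have "card Z \<le> card (orbit_class_pair ` ?orbits)"
    unfolding Z_def by (rule card_mono) (simp_all add: finite_orbits[OF finite_B])
  also have "\<dots> \<le> card ?orbits"
    using finite_orbits[OF finite_B] by (rule card_image_le)
  finally have "card Z \<le> card ?orbits" .
  moreover have "\<exists>\<sigma>\<in>local_group. (\<sigma> y1, \<sigma> y2) \<in> Z"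
    if y1: "y1 \<in> local_classes" and y2: "y2 \<in> local_classes" for y1 y2
  proof -
    obtain g where g: "g \<in> stabiliser"
      and "(local_action g y1, local_action g y2) \<in> orbit_class_pair ` ?orbits"
      using stabiliser_moves_pair_to_orbit_class_pair[OF hom a0 y1 y2] by blast
    moreover have "local_action g y1 \<in> local_classes" "local_action g y2 \<in> local_classes"
      using cls_img_local_classes[OF g] y1 y2 by (simp_all add: local_action_def)
    ultimately have "(local_action g y1, local_action g y2) \<in> Z" by (simp add: Z_def)
    then show ?thesis using g by (auto simp: local_group_def)
  qed
  moreover have "Z \<subseteq> local_classes \<times> local_classes" by (simp add: Z_def)
  ultimately show ?thesis by blast
qed

theorem equivariant_chain_length_le:
  fixes V :: "nat \<Rightarrow> ('a list set \<Rightarrow> 'f::field_char_0) set"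
  assumes hom: "homogeneous A ar Rel" and a0: "a0 \<in> B"
    and V: "\<And>i. i \<le> n \<Longrightarrow> equivariant_subspace A ar Rel (S // E) (V i)"
    and mono: "\<And>i. i < n \<Longrightarrow> V i \<subseteq> V (Suc i)"
    and witness: "\<And>i. i < n \<Longrightarrow> \<exists>v \<in> V (Suc i) - V i. \<forall>c. v c \<noteq> 0 \<longrightarrow> c \<in> local_classes"
  shows "n \<le> card (orbits ar Rel B (Suc (2 * d)))"
proof -
  define W where "W i = {w \<in> V i. \<forall>c. c \<notin> local_classes \<longrightarrow> w c = 0}" for i
  have "local_perm.invariant_subspace (W i)" if "i \<le> n" for i
    unfolding W_def by (rule invariant_subspace_supported_part[OF V[OF that]])
  moreover have "W i \<subset> W (Suc i)" if "i < n" for i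
    using mono[OF that] witness[OF that] by (auto simp: W_def)
  moreover obtain Z where "Z \<subseteq> local_classes \<times> local_classes"
    "card Z \<le> card (orbits ar Rel B (Suc (2 * d)))"
    "\<forall>y1\<in>local_classes. \<forall>y2\<in>local_classes. \<exists>\<sigma>\<in>local_group. (\<sigma> y1, \<sigma> y2) \<in> Z"
    using small_set_meeting_pair_orbits[OF hom a0] by blast
  ultimately show ?thesis using local_perm.invariant_subspace_chain_length_le[of Z n W] by force
qed

end

lemma strict_equivariant_chain_bounded_by_approximation:
  fixes V :: "nat \<Rightarrow> ('a list set \<Rightarrow> 'f::field_char_0) set"
  assumes hom: "homogeneous A ar Rel" and S: "orbit_finite_set A ar Rel d S E" and a0: "a0 \<in> A"
    and \<B>_covers: "\<forall>B0. finite B0 \<and> B0 \<subseteq> A \<longrightarrow> (\<exists>B\<in>\<B>. B0 \<subseteq> B)"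
    and \<B>_finite: "\<forall>B\<in>\<B>. finite B \<and> B \<subseteq> A"
    and V: "\<And>i. i \<le> n \<Longrightarrow> equivariant_subspace A ar Rel (S // E) (V i)"
    and chain: "\<And>i. i < n \<Longrightarrow> V i \<subset> V (Suc i)"
  shows "\<exists>B\<in>\<B>. n \<le> card (orbits ar Rel B (Suc (2 * d)))"
proof -
  have "V (Suc i) \<subseteq> Lin (S // E)" if "i < n" for i
    using V[of "Suc i"] that by (simp add: equivariant_subspace_def lin_subspace_def)
  then have "\<exists>B0. finite B0 \<and> B0 \<subseteq> A \<and>
      (\<forall>i<n. \<exists>v \<in> V (Suc i) - V i. \<forall>c. v c \<noteq> 0 \<longrightarrow> c \<in> classes_over S E B0)"
    using S by (intro strict_chain_witnesses_over_finite_set[where d = d] chain)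
      (simp_all add: orbit_finite_set_def)
  then obtain B0 where B0: "finite B0" "B0 \<subseteq> A"
    "\<And>i. i < n \<Longrightarrow> \<exists>v \<in> V (Suc i) - V i. \<forall>c. v c \<noteq> 0 \<longrightarrow> c \<in> classes_over S E B0"
    by blast
  obtain B where B: "B \<in> \<B>" "insert a0 B0 \<subseteq> B"
    using \<B>_covers B0(1,2) a0 by (metis finite_insert insert_subset)
  then interpret orbit_finite_local A ar Rel d S E B using S \<B>_finite by unfold_locales auto
  have "n \<le> card (orbits ar Rel B (Suc (2 * d)))"
  proof (rule equivariant_chain_length_le[OF hom, of a0])
    show "a0 \<in> B" using B(2) by simp
    show "\<exists>v \<in> V (Suc i) - V i. \<forall>c. v c \<noteq> 0 \<longrightarrow> c \<in> classes_over S E B" if "i < n" for i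
      using B0(3)[OF that] classes_over_mono[of B0 B] B(2) by blast
  qed (use V chain in auto)
  then show ?thesis using B(1) by blast
qed

theorem mainTheorem3:
  fixes A :: "'a set" and ar :: "'s \<Rightarrow> nat" and Rel :: "'s \<Rightarrow> 'a list set"
  assumes "rel_struct A ar Rel"
    and "countable A" and "infinite A"
    and "homogeneous A ar Rel"
    and "oligomorphic A ar Rel"
    and "oligomorphic_approximation A ar Rel"
  shows "finite_length_property A ar Rel TYPE('f::field_char_0)"
  unfolding finite_length_property_def finite_length_def
proof (intro allI impI)
  fix d S E assume S: "orbit_finite_set A ar Rel d S E"
  obtain a0 where a0: "a0 \<in> A" using \<open>infinite A\<close> by (metis ex_in_conv finite.emptyI)
  obtain \<B> N where \<B>: "\<forall>B0. finite B0 \<and> B0 \<subseteq> A \<longrightarrow> (\<exists>B\<in>\<B>. B0 \<subseteq> B)"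
    "\<forall>B\<in>\<B>. finite B \<and> B \<subseteq> A" "\<forall>B\<in>\<B>. card (orbits ar Rel B (Suc (2 * d))) \<le> N"
    using \<open>oligomorphic_approximation A ar Rel\<close> unfolding oligomorphic_approximation_def
    by (metis le_add1 plus_1_eq_Suc)
  show "\<exists>N. \<forall>n (V :: nat \<Rightarrow> ('a list set \<Rightarrow> 'f) set).
    (\<forall>i\<le>n. equivariant_subspace A ar Rel (S // E) (V i)) \<and> (\<forall>i<n. V i \<subset> V (Suc i)) \<longrightarrow> n \<le> N"
  proof (intro exI[of _ N] allI impI, elim conjE)
    fix n and V :: "nat \<Rightarrow> ('a list set \<Rightarrow> 'f) set"
    assume "\<forall>i\<le>n. equivariant_subspace A ar Rel (S // E) (V i)" "\<forall>i<n. V i \<subset> V (Suc i)"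
    then obtain B where "B \<in> \<B>" "n \<le> card (orbits ar Rel B (Suc (2 * d)))"
      using strict_equivariant_chain_bounded_by_approximation[OF \<open>homogeneous A ar Rel\<close> S a0 \<B>(1,2)]
      by blast
    then show "n \<le> N" using \<B>(3) by fastforce
  qed
qed

end
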